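(* Let $q\in\mathbb{C}^\times$ be not a root of unity and $k\in\mathbb{Z}_{>0}$. The polynomials $p_t(q)(x_1,\dots,x_k)$, $1\le t\le k$, are algebraically independent over $\mathbb{C}$.
   Context: For $t,k>0$, $p_t(q)(x_1,\dots,x_k)=\sum_{\lambda\vdash t,\ \ell(\lambda)\le k}q^{-\ell(\lambda)}(q-q^{-1})^{\ell(\lambda)-1}m_\lambda(x_1,\dots,x_k)\in\mathbb{C}[x_1,\dots,x_k]$, where $\lambda$ runs over partitions of $t$ with at most $k$ nonzero parts ($\ell(\lambda)$ the number of nonzero parts) and $m_\lambda$ is the monomial symmetric polynomial. *)

theory Defs
  imports Complex_Main "HOL-Library.Poly_Mapping" "HOL-Library.Multiset"
begin

text \<open>Multivariate polynomials over the complex numbers: finitely supported maps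
from monomials (finitely supported exponent vectors) to coefficients, with the
convolution product of HOL-Library.Poly_Mapping (a commutative ring).
Variable x_i is the monomial with exponent vector single i 1.\<close>

type_synonym cpoly = "(nat \<Rightarrow>\<^sub>0 nat) \<Rightarrow>\<^sub>0 complex"

definition cconst :: "complex \<Rightarrow> cpoly" where
  "cconst c = Poly_Mapping.single 0 c"

definition monomial :: "(nat \<Rightarrow>\<^sub>0 nat) \<Rightarrow> cpoly" where
  "monomial \<alpha> = Poly_Mapping.single \<alpha> 1"

text \<open>Partitions of t with at most k nonzero parts, as multisets of positive parts.
The length of the partition is the size of the multiset.\<close>
definition partitions_le :: "nat \<Rightarrow> nat \<Rightarrow> nat multiset set" where
  "partitions_le t k = {lam. 0 \<notin># lam \<and> sum_mset lam = t \<and> size lam \<le> k}"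

text \<open>Monomial symmetric polynomial m_lambda(x_1,...,x_k): sum of x^alpha over all
exponent vectors alpha supported on {1..k} whose multiset of nonzero entries is lambda.\<close>
definition mono_sym :: "nat \<Rightarrow> nat multiset \<Rightarrow> cpoly" where
  "mono_sym k lam = (\<Sum>\<alpha>\<in>{\<alpha>. Poly_Mapping.keys \<alpha> \<subseteq> {1..k} \<and>
       filter_mset (\<lambda>v. v \<noteq> 0) (image_mset (Poly_Mapping.lookup \<alpha>) (mset_set {1..k})) = lam}.
       monomial \<alpha>)"

definition p_poly :: "complex \<Rightarrow> nat \<Rightarrow> nat \<Rightarrow> cpoly" where
  "p_poly q t k = (\<Sum>lam\<in>partitions_le t k.
       cconst ((inverse q) ^ size lam * (q - inverse q) ^ (size lam - 1)) * mono_sym k lam)"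

definition subst_poly :: "(nat \<Rightarrow> cpoly) \<Rightarrow> cpoly \<Rightarrow> cpoly" where
  "subst_poly G F = (\<Sum>m\<in>Poly_Mapping.keys F. cconst (Poly_Mapping.lookup F m) * (\<Prod>i\<in>Poly_Mapping.keys m. G i ^ Poly_Mapping.lookup m i))"

definition alg_indep_on :: "nat set \<Rightarrow> (nat \<Rightarrow> cpoly) \<Rightarrow> bool" where
  "alg_indep_on I G \<longleftrightarrow>
     (\<forall>F. F \<noteq> 0 \<and> (\<forall>m\<in>Poly_Mapping.keys F. Poly_Mapping.keys m \<subseteq> I) \<longrightarrow> subst_poly G F \<noteq> 0)"

end

(* Put a = 1 - q^-2. For t > 0, (q - q^-1) p_t(x) = sum over exponent vectors alpha of degree t of
   a^(number of variables in alpha) x^alpha, the t-th coefficient of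
     S(T) = prod_i (1 + a x_i T/(1 - x_i T)) = prod_i (1 - q^-2 x_i T)/(1 - x_i T).
   So S(T) E(T) = E(q^-2 T) with E(T) = prod_i (1 - x_i T). Given target values for S_1, ..., S_k,
   this triangular system determines E modulo T^(k+1), because q^-2 is not a root of unity, and by
   the fundamental theorem of algebra every E with E(0) = 1 and degree k factors as prod_i (1 - x_i T).
   Hence x |-> (p_1(x), ..., p_k(x)) maps C^k onto C^k, and a polynomial relation among the p_t
   is a polynomial vanishing on all of C^k, which is zero. *)

theory Submission
  imports
    Defs
    "HOL-Computational_Algebra.Polynomial_FPS"
    "HOL-Computational_Algebra.Fundamental_Theorem_Algebra"
begin

unbundle fps_syntax

definition eval_monom :: "('v \<Rightarrow> 'a::comm_semiring_1) \<Rightarrow> ('v \<Rightarrow>\<^sub>0 nat) \<Rightarrow> 'a" where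
  "eval_monom x m = (\<Prod>i\<in>Poly_Mapping.keys m. x i ^ Poly_Mapping.lookup m i)"

definition eval_poly :: "('v \<Rightarrow> 'a::comm_semiring_1) \<Rightarrow> (('v \<Rightarrow>\<^sub>0 nat) \<Rightarrow>\<^sub>0 'a) \<Rightarrow> 'a" where
  "eval_poly x P = (\<Sum>m\<in>Poly_Mapping.keys P. Poly_Mapping.lookup P m * eval_monom x m)"

lemma eval_monom_superset:
  assumes "finite S" "Poly_Mapping.keys m \<subseteq> S"
  shows "eval_monom x m = (\<Prod>i\<in>S. x i ^ Poly_Mapping.lookup m i)"
  unfolding eval_monom_def
  by (rule prod.mono_neutral_left) (use assms in \<open>auto simp: in_keys_iff\<close>)

lemma eval_poly_superset:
  assumes "finite S" "Poly_Mapping.keys P \<subseteq> S"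
  shows "eval_poly x P = (\<Sum>m\<in>S. Poly_Mapping.lookup P m * eval_monom x m)"
  unfolding eval_poly_def
  by (rule sum.mono_neutral_left) (use assms in \<open>auto simp: in_keys_iff\<close>)

lemma eval_monom_0 [simp]: "eval_monom x 0 = 1"
  by (simp add: eval_monom_def)

lemma eval_monom_add: "eval_monom x (m + n) = eval_monom x m * eval_monom x n"
proof -
  let ?S = "Poly_Mapping.keys m \<union> Poly_Mapping.keys n"
  have "eval_monom x (m + n) = (\<Prod>i\<in>?S. x i ^ Poly_Mapping.lookup (m + n) i)"
    by (rule eval_monom_superset) (auto simp: keys_add)
  also have "\<dots> = (\<Prod>i\<in>?S. x i ^ Poly_Mapping.lookup m i) * (\<Prod>i\<in>?S. x i ^ Poly_Mapping.lookup n i)"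
    by (simp add: lookup_add power_add prod.distrib)
  also have "\<dots> = eval_monom x m * eval_monom x n"
    by (subst (1 2) eval_monom_superset[symmetric]) auto
  finally show ?thesis .
qed

lemma eval_poly_0 [simp]: "eval_poly x 0 = 0"
  by (simp add: eval_poly_def)

lemma eval_poly_single [simp]: "eval_poly x (Poly_Mapping.single m c) = c * eval_monom x m"
  by (cases "c = 0") (auto simp: eval_poly_def)

lemma eval_poly_1 [simp]: "eval_poly x 1 = 1"
  by (simp flip: single_one)

lemma eval_poly_add: "eval_poly x (P + Q) = eval_poly x P + eval_poly x Q"
proof -
  let ?S = "Poly_Mapping.keys P \<union> Poly_Mapping.keys Q"
  have "eval_poly x (P + Q) = (\<Sum>m\<in>?S. Poly_Mapping.lookup (P + Q) m * eval_monom x m)"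
    by (rule eval_poly_superset) (auto simp: keys_add)
  also have "\<dots> = (\<Sum>m\<in>?S. Poly_Mapping.lookup P m * eval_monom x m)
                 + (\<Sum>m\<in>?S. Poly_Mapping.lookup Q m * eval_monom x m)"
    by (simp add: lookup_add distrib_right sum.distrib)
  also have "\<dots> = eval_poly x P + eval_poly x Q"
    by (subst (1 2) eval_poly_superset[symmetric]) auto
  finally show ?thesis .
qed

lemma eval_poly_sum: "eval_poly x (\<Sum>i\<in>A. P i) = (\<Sum>i\<in>A. eval_poly x (P i))"
  by (induction A rule: infinite_finite_induct) (auto simp: eval_poly_add)

lemma poly_mapping_sum_single:
  "P = (\<Sum>m\<in>Poly_Mapping.keys P. Poly_Mapping.single m (Poly_Mapping.lookup P m))"
  by (rule poly_mapping_eqI)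
     (auto simp: lookup_sum lookup_single when_def in_keys_iff cong: sum.cong)

lemma eval_poly_single_mult:
  "eval_poly x (Poly_Mapping.single m c * Q) = c * eval_monom x m * eval_poly x Q"
proof -
  have "Poly_Mapping.single m c * Q = (\<Sum>n\<in>Poly_Mapping.keys Q.
          Poly_Mapping.single (m + n) (c * Poly_Mapping.lookup Q n))"
    by (subst poly_mapping_sum_single[of Q]) (simp add: sum_distrib_left mult_single)
  then have "eval_poly x (Poly_Mapping.single m c * Q) = (\<Sum>n\<in>Poly_Mapping.keys Q.
      c * eval_monom x m * (Poly_Mapping.lookup Q n * eval_monom x n))"
    by (simp only: eval_poly_sum) (simp add: eval_monom_add mult_ac)
  then show ?thesis
    by (simp add: eval_poly_def[of x Q] sum_distrib_left)
qed

lemma eval_poly_mult: "eval_poly x (P * Q) = eval_poly x P * eval_poly x Q"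
proof -
  have "P * Q = (\<Sum>m\<in>Poly_Mapping.keys P. Poly_Mapping.single m (Poly_Mapping.lookup P m) * Q)"
    by (subst poly_mapping_sum_single[of P]) (simp add: sum_distrib_right)
  then show ?thesis
    by (simp add: eval_poly_sum eval_poly_single_mult eval_poly_def[of x P] sum_distrib_right)
qed

lemma eval_poly_prod: "eval_poly x (\<Prod>i\<in>A. P i) = (\<Prod>i\<in>A. eval_poly x (P i))"
  by (induction A rule: infinite_finite_induct) (auto simp: eval_poly_mult)

lemma eval_poly_power: "eval_poly x (P ^ n) = eval_poly x P ^ n"
  by (induction n) (auto simp: eval_poly_mult)

lemma eval_poly_cconst [simp]: "eval_poly x (cconst c) = c"
  by (simp add: cconst_def)

lemma eval_poly_monomial [simp]: "eval_poly x (monomial m) = eval_monom x m"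
  by (simp add: monomial_def)

lemma eval_poly_subst_poly:
  "eval_poly x (subst_poly G F) = eval_poly (\<lambda>i. eval_poly x (G i)) F"
  by (simp add: subst_poly_def eval_poly_sum eval_poly_mult eval_poly_prod eval_poly_power
      eval_poly_def[of _ F] eval_monom_def)

lemma eval_poly_cong:
  assumes "\<forall>m\<in>Poly_Mapping.keys P. Poly_Mapping.keys m \<subseteq> I" "\<And>i. i \<in> I \<Longrightarrow> x i = y i"
  shows "eval_poly x P = eval_poly y P"
proof -
  have "eval_monom x m = eval_monom y m" if "m \<in> Poly_Mapping.keys P" for m
  proof -
    have "Poly_Mapping.keys m \<subseteq> I"
      using assms(1) that by blast
    then show ?thesis
      unfolding eval_monom_def using assms(2) by (intro prod.cong) auto
  qed
  then show ?thesis
    unfolding eval_poly_def by simp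
qed

section \<open>Polynomials vanishing everywhere\<close>

lemma sum_digits_less:
  fixes a :: "nat \<Rightarrow> nat"
  assumes "\<forall>i<n. a i < N"
  shows "(\<Sum>i<n. a i * N ^ i) < N ^ n"
  using assms
proof (induction n)
  case (Suc n)
  then have "(\<Sum>i<Suc n. a i * N ^ i) < N ^ n + a n * N ^ n"
    by simp
  also have "\<dots> = Suc (a n) * N ^ n"
    by simp
  also have "\<dots> \<le> N * N ^ n"
    using Suc.prems by (intro mult_right_mono) auto
  finally show ?case
    by simp
qed simp

lemma sum_digits_inj:
  fixes a b :: "nat \<Rightarrow> nat"
  assumes "\<forall>i<n. a i < N" "\<forall>i<n. b i < N"
    and "(\<Sum>i<n. a i * N ^ i) = (\<Sum>i<n. b i * N ^ i)"
  shows "\<forall>i<n. a i = b i"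
  using assms
proof (induction n)
  case (Suc n)
  define A B where "A = (\<Sum>i<n. a i * N ^ i)" and "B = (\<Sum>i<n. b i * N ^ i)"
  have A: "A < N ^ n" and B: "B < N ^ n"
    using Suc.prems by (auto simp: A_def B_def intro!: sum_digits_less)
  have eq: "A + a n * N ^ n = B + b n * N ^ n"
    using Suc.prems(3) by (simp add: A_def B_def)
  have "N ^ n > 0"
    using A by linarith
  then have "(A + a n * N ^ n) div N ^ n = a n" "(B + b n * N ^ n) div N ^ n = b n"
    using A B by simp_all
  then have "a n = b n"
    using eq by simp
  moreover have "\<forall>i<n. a i = b i"
    using Suc.prems eq \<open>a n = b n\<close> by (intro Suc.IH) (auto simp: A_def B_def)
  ultimately show ?case
    by (auto simp: less_Suc_eq)
qed simp

text \<open>Kronecker substitution: with \<open>N\<close> exceeding all exponents, \<open>x\<^sub>i = s ^ N ^ i\<close> sends distinct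
  monomials of \<open>F\<close> to distinct powers of \<open>s\<close>, so \<open>F\<close> becomes a univariate polynomial with the
  same nonzero coefficients.\<close>
lemma eval_poly_eq_0_imp_eq_0:
  fixes F :: "(nat \<Rightarrow>\<^sub>0 nat) \<Rightarrow>\<^sub>0 'a::{idom, ring_char_0}"
  assumes "\<And>x. eval_poly x F = 0"
  shows "F = 0"
proof (rule ccontr)
  assume "F \<noteq> 0"
  then obtain m0 where m0: "m0 \<in> Poly_Mapping.keys F"
    by fastforce
  have "finite (\<Union>m\<in>Poly_Mapping.keys F. Poly_Mapping.keys m)"
    by simp
  then obtain K where K: "\<And>m. m \<in> Poly_Mapping.keys F \<Longrightarrow> Poly_Mapping.keys m \<subseteq> {..<K}"
    by (meson UN_subset_iff finite_nat_iff_bounded)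
  have "finite (\<Union>m\<in>Poly_Mapping.keys F. insert 0 (Poly_Mapping.lookup m ` Poly_Mapping.keys m))"
    by simp
  then obtain N where N_bound:
    "\<And>m. m \<in> Poly_Mapping.keys F \<Longrightarrow> insert 0 (Poly_Mapping.lookup m ` Poly_Mapping.keys m) \<subseteq> {..<N}"
    by (meson UN_subset_iff finite_nat_iff_bounded)
  have N: "Poly_Mapping.lookup m i < N" if "m \<in> Poly_Mapping.keys F" for m i
  proof -
    have "Poly_Mapping.lookup m i \<in> insert 0 (Poly_Mapping.lookup m ` Poly_Mapping.keys m)"
      by (cases "i \<in> Poly_Mapping.keys m") (auto simp: in_keys_iff)
    then show ?thesis
      using N_bound[OF that] by auto
  qed
  define e where "e m = (\<Sum>i<K. Poly_Mapping.lookup m i * N ^ i)" for m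
  have e_inj: "inj_on e (Poly_Mapping.keys F)"
  proof (rule inj_onI, rule poly_mapping_eqI)
    fix m m' i
    assume m: "m \<in> Poly_Mapping.keys F" and m': "m' \<in> Poly_Mapping.keys F" and "e m = e m'"
    then have "\<forall>i<K. Poly_Mapping.lookup m i = Poly_Mapping.lookup m' i"
      using N by (intro sum_digits_inj[of K _ N]) (auto simp: e_def)
    moreover have "Poly_Mapping.lookup m i = 0 \<and> Poly_Mapping.lookup m' i = 0" if "\<not> i < K"
      using K[OF m] K[OF m'] that by (auto simp: in_keys_iff)
    ultimately show "Poly_Mapping.lookup m i = Poly_Mapping.lookup m' i"
      by (cases "i < K") auto
  qed
  have eval_monom_e: "eval_monom (\<lambda>i. s ^ N ^ i) m = s ^ e m" if "m \<in> Poly_Mapping.keys F" for s :: 'a and m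
  proof -
    have "eval_monom (\<lambda>i. s ^ N ^ i) m = (\<Prod>i<K. s ^ (Poly_Mapping.lookup m i * N ^ i))"
      using K[OF that] by (subst eval_monom_superset) (auto simp flip: power_mult simp: mult.commute)
    then show ?thesis
      by (simp add: e_def power_sum)
  qed
  define p where "p = (\<Sum>m\<in>Poly_Mapping.keys F. monom (Poly_Mapping.lookup F m) (e m))"
  have "poly p s = eval_poly (\<lambda>i. s ^ N ^ i) F" for s
    by (simp add: p_def eval_poly_def poly_sum poly_monom eval_monom_e)
  then have "p = 0"
    using assms poly_all_0_iff_0 by auto
  moreover have "coeff p (e m0) = (\<Sum>m\<in>Poly_Mapping.keys F. if m = m0 then Poly_Mapping.lookup F m else 0)"
    unfolding p_def coeff_sum coeff_monom by (intro sum.cong refl) (use inj_onD[OF e_inj _ _ m0] in auto)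
  ultimately show False
    using m0 by (simp add: in_keys_iff)
qed

definition poly_mapping_of_mset :: "'a multiset \<Rightarrow> 'a \<Rightarrow>\<^sub>0 nat" where
  "poly_mapping_of_mset X = Abs_poly_mapping (count X)"

definition mset_of_poly_mapping :: "('a \<Rightarrow>\<^sub>0 nat) \<Rightarrow> 'a multiset" where
  "mset_of_poly_mapping \<alpha> = Abs_multiset (Poly_Mapping.lookup \<alpha>)"

lemma lookup_poly_mapping_of_mset [simp]: "Poly_Mapping.lookup (poly_mapping_of_mset X) = count X"
proof -
  have "{x. count X x \<noteq> 0} = set_mset X"
    by (auto simp: count_eq_zero_iff)
  then show ?thesis
    by (simp add: poly_mapping_of_mset_def)
qed

lemma count_mset_of_poly_mapping [simp]: "count (mset_of_poly_mapping \<alpha>) = Poly_Mapping.lookup \<alpha>"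
proof -
  have "{x. 0 < Poly_Mapping.lookup \<alpha> x} = Poly_Mapping.keys \<alpha>"
    by (simp add: keys.rep_eq)
  then show ?thesis
    by (simp add: mset_of_poly_mapping_def)
qed

lemma set_mset_of_poly_mapping [simp]: "set_mset (mset_of_poly_mapping \<alpha>) = Poly_Mapping.keys \<alpha>"
  by (auto simp: in_keys_iff simp flip: count_greater_zero_iff)

lemma poly_mapping_of_mset_inverse [simp]: "poly_mapping_of_mset (mset_of_poly_mapping \<alpha>) = \<alpha>"
  by (rule poly_mapping_eqI) simp

lemma inj_poly_mapping_of_mset: "inj poly_mapping_of_mset"
  by (rule injI) (metis lookup_poly_mapping_of_mset multiset_eqI)

lemma keys_poly_mapping_of_mset [simp]: "Poly_Mapping.keys (poly_mapping_of_mset X) = set_mset X"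
  by (auto simp: in_keys_iff)

definition exps_of_degree :: "nat \<Rightarrow> nat \<Rightarrow> (nat \<Rightarrow>\<^sub>0 nat) set" where
  "exps_of_degree k t =
     {\<alpha>. Poly_Mapping.keys \<alpha> \<subseteq> {1..k} \<and> (\<Sum>i\<in>{1..k}. Poly_Mapping.lookup \<alpha> i) = t}"

lemma size_eq_sum_count:
  assumes "finite A" "set_mset X \<subseteq> A"
  shows "size X = (\<Sum>i\<in>A. count X i)"
  unfolding size_multiset_overloaded_eq
  by (rule sum.mono_neutral_left) (use assms in \<open>auto simp: not_in_iff\<close>)

lemma exps_of_degree_eq_image:
  "exps_of_degree k t = poly_mapping_of_mset ` multisets_of_size {1..k} t"
proof (intro equalityI subsetI)
  fix \<alpha> assume "\<alpha> \<in> exps_of_degree k t"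
  then have "mset_of_poly_mapping \<alpha> \<in> multisets_of_size {1..k} t"
    by (auto simp: exps_of_degree_def multisets_of_size_def size_eq_sum_count[of "{1..k}"])
  then show "\<alpha> \<in> poly_mapping_of_mset ` multisets_of_size {1..k} t"
    by (metis image_eqI poly_mapping_of_mset_inverse)
qed (auto simp: exps_of_degree_def multisets_of_size_def size_eq_sum_count[of "{1..k}"])

lemma finite_exps_of_degree: "finite (exps_of_degree k t)"
  by (simp add: exps_of_degree_eq_image finite_multisets_of_size)

definition exp_partition :: "nat \<Rightarrow> (nat \<Rightarrow>\<^sub>0 nat) \<Rightarrow> nat multiset" where
  "exp_partition k \<alpha> =
     filter_mset (\<lambda>v. v \<noteq> 0) (image_mset (Poly_Mapping.lookup \<alpha>) (mset_set {1..k}))"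

lemma exp_partition_eq:
  assumes "Poly_Mapping.keys \<alpha> \<subseteq> {1..k}"
  shows "exp_partition k \<alpha> = image_mset (Poly_Mapping.lookup \<alpha>) (mset_set (Poly_Mapping.keys \<alpha>))"
proof -
  have "{i \<in> {1..k}. Poly_Mapping.lookup \<alpha> i \<noteq> 0} = Poly_Mapping.keys \<alpha>"
    using assms by (auto simp: in_keys_iff)
  then show ?thesis
    by (simp add: exp_partition_def filter_mset_image_mset)
qed

lemma sum_mset_exp_partition:
  assumes "Poly_Mapping.keys \<alpha> \<subseteq> {1..k}"
  shows "sum_mset (exp_partition k \<alpha>) = (\<Sum>i\<in>{1..k}. Poly_Mapping.lookup \<alpha> i)"
  using assms unfolding exp_partition_eq[OF assms] sum_unfold_sum_mset[symmetric]
  by (intro sum.mono_neutral_left) (auto simp: in_keys_iff)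

lemma exp_partition_in_partitions_le:
  assumes "\<alpha> \<in> exps_of_degree k t"
  shows "exp_partition k \<alpha> \<in> partitions_le t k"
proof -
  have keys: "Poly_Mapping.keys \<alpha> \<subseteq> {1..k}"
    using assms by (simp add: exps_of_degree_def)
  then have "card (Poly_Mapping.keys \<alpha>) \<le> k"
    using card_mono[of "{1..k}"] by fastforce
  moreover have "sum_mset (exp_partition k \<alpha>) = t"
    using assms sum_mset_exp_partition[OF keys] by (simp add: exps_of_degree_def)
  ultimately show ?thesis
    using keys by (auto simp: partitions_le_def exp_partition_eq in_keys_iff)
qed

lemma finite_partitions_le: "finite (partitions_le t k)"
proof (rule finite_subset)
  show "partitions_le t k \<subseteq> (\<Union>n\<le>k. multisets_of_size {..t} n)"
    by (auto simp: partitions_le_def multisets_of_size_def sum_mset.remove)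
qed auto

definition p_coeff :: "complex \<Rightarrow> nat \<Rightarrow> complex" where
  "p_coeff q l = inverse q ^ l * (q - inverse q) ^ (l - 1)"

lemma eval_mono_sym:
  assumes "lam \<in> partitions_le t k"
  shows "eval_poly x (mono_sym k lam) =
    (\<Sum>\<alpha>\<in>{\<alpha> \<in> exps_of_degree k t. exp_partition k \<alpha> = lam}. eval_monom x \<alpha>)"
proof -
  have "exp_partition k \<alpha> = lam \<Longrightarrow> Poly_Mapping.keys \<alpha> \<subseteq> {1..k} \<Longrightarrow>
      (\<Sum>i\<in>{1..k}. Poly_Mapping.lookup \<alpha> i) = t" for \<alpha>
    using assms sum_mset_exp_partition[of \<alpha> k] by (auto simp: partitions_le_def)
  then show ?thesis
    unfolding mono_sym_def eval_poly_sum exp_partition_def[symmetric]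
    by (auto simp: exps_of_degree_def intro!: sum.cong)
qed

lemma eval_p_poly:
  "eval_poly x (p_poly q t k) =
     (\<Sum>\<alpha>\<in>exps_of_degree k t. p_coeff q (card (Poly_Mapping.keys \<alpha>)) * eval_monom x \<alpha>)"
proof -
  have "eval_poly x (p_poly q t k) = (\<Sum>lam\<in>partitions_le t k.
      \<Sum>\<alpha>\<in>{\<alpha> \<in> exps_of_degree k t. exp_partition k \<alpha> = lam}. p_coeff q (size lam) * eval_monom x \<alpha>)"
    by (simp add: p_poly_def eval_poly_sum eval_poly_mult eval_mono_sym p_coeff_def sum_distrib_left)
  also have "\<dots> = (\<Sum>lam\<in>partitions_le t k.
      \<Sum>\<alpha>\<in>{\<alpha> \<in> exps_of_degree k t. exp_partition k \<alpha> = lam}.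
        p_coeff q (card (Poly_Mapping.keys \<alpha>)) * eval_monom x \<alpha>)"
    by (intro sum.cong refl) (auto simp: exps_of_degree_def exp_partition_eq)
  also have "\<dots> = (\<Sum>\<alpha>\<in>exps_of_degree k t. p_coeff q (card (Poly_Mapping.keys \<alpha>)) * eval_monom x \<alpha>)"
    using exp_partition_in_partitions_le
    by (intro sum.group finite_exps_of_degree finite_partitions_le) auto
  finally show ?thesis .
qed

section \<open>A generating function for the p_t\<close>

definition geom_fps :: "'a::comm_ring_1 \<Rightarrow> 'a \<Rightarrow> 'a fps" where
  "geom_fps a y = Abs_fps (\<lambda>n. if n = 0 then 1 else a * y ^ n)"

definition geom_prod_fps :: "'a::comm_ring_1 \<Rightarrow> (nat \<Rightarrow> 'a) \<Rightarrow> nat \<Rightarrow> 'a fps" where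
  "geom_prod_fps a x k = (\<Prod>i\<in>{1..k}. geom_fps a (x i))"

definition linear_prod_fps :: "(nat \<Rightarrow> 'a::comm_ring_1) \<Rightarrow> nat \<Rightarrow> 'a fps" where
  "linear_prod_fps x k = (\<Prod>i\<in>{1..k}. 1 - fps_const (x i) * fps_X)"

lemma geom_prod_fps_nth:
  "geom_prod_fps a x k $ t =
     (\<Sum>\<alpha>\<in>exps_of_degree k t. a ^ card (Poly_Mapping.keys \<alpha>) * eval_monom x \<alpha>)"
proof -
  have "geom_prod_fps a x k $ t =
      (\<Sum>X\<in>multisets_of_size {1..k} t. \<Prod>i\<in>{1..k}. geom_fps a (x i) $ count X i)"
    unfolding geom_prod_fps_def by (rule fps_prod_nth') simp
  also have "\<dots> = (\<Sum>X\<in>multisets_of_size {1..k} t.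
      a ^ card (set_mset X) * (\<Prod>i\<in>set_mset X. x i ^ count X i))"
  proof (rule sum.cong[OF refl])
    fix X assume "X \<in> multisets_of_size {1..k} t"
    then have "set_mset X \<subseteq> {1..k}"
      by (simp add: multisets_of_size_def)
    then have "(\<Prod>i\<in>{1..k}. geom_fps a (x i) $ count X i) =
        (\<Prod>i\<in>set_mset X. geom_fps a (x i) $ count X i)"
      by (intro prod.mono_neutral_right) (auto simp: geom_fps_def not_in_iff)
    also have "\<dots> = (\<Prod>i\<in>set_mset X. a * x i ^ count X i)"
      by (intro prod.cong refl) (simp add: geom_fps_def flip: count_greater_zero_iff)
    finally have "(\<Prod>i\<in>{1..k}. geom_fps a (x i) $ count X i) = (\<Prod>i\<in>set_mset X. a * x i ^ count X i)" .
    then show "(\<Prod>i\<in>{1..k}. geom_fps a (x i) $ count X i) =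
        a ^ card (set_mset X) * (\<Prod>i\<in>set_mset X. x i ^ count X i)"
      by (simp add: prod.distrib)
  qed
  also have "\<dots> = (\<Sum>\<alpha>\<in>exps_of_degree k t. a ^ card (Poly_Mapping.keys \<alpha>) * eval_monom x \<alpha>)"
    unfolding exps_of_degree_eq_image
    by (subst sum.reindex[OF inj_on_subset[OF inj_poly_mapping_of_mset subset_UNIV]])
       (simp add: eval_monom_def)
  finally show ?thesis .
qed

lemma geom_prod_fps_nth_eq_p_poly:
  assumes "t > 0"
  shows "geom_prod_fps (inverse q * (q - inverse q)) x k $ t = (q - inverse q) * eval_poly x (p_poly q t k)"
proof -
  have "(q - inverse q) * p_coeff q (card (Poly_Mapping.keys \<alpha>)) =
      (inverse q * (q - inverse q)) ^ card (Poly_Mapping.keys \<alpha>)" if "\<alpha> \<in> exps_of_degree k t" for \<alpha>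
  proof -
    have "\<alpha> \<noteq> 0"
      using that assms by (auto simp: exps_of_degree_def)
    then have "card (Poly_Mapping.keys \<alpha>) \<noteq> 0"
      by simp
    then show ?thesis
      by (cases "card (Poly_Mapping.keys \<alpha>)") (auto simp: p_coeff_def power_mult_distrib)
  qed
  then show ?thesis
    by (simp add: geom_prod_fps_nth eval_p_poly sum_distrib_left mult.assoc[symmetric])
qed

lemma geom_fps_mult_linear:
  "geom_fps a y * (1 - fps_const y * fps_X) = 1 - fps_const ((1 - a) * y) * fps_X"
proof (rule fps_ext)
  fix n
  show "(geom_fps a y * (1 - fps_const y * fps_X)) $ n = (1 - fps_const ((1 - a) * y) * fps_X) $ n"
    by (cases n) (auto simp: geom_fps_def algebra_simps)
qed

lemma linear_prod_fps_compose_scale: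
  fixes x :: "nat \<Rightarrow> 'a::idom"
  shows "linear_prod_fps x k oo (fps_const b * fps_X) = linear_prod_fps (\<lambda>i. b * x i) k"
  unfolding linear_prod_fps_def
  by (subst fps_compose_prod_distrib)
     (auto simp: fps_compose_sub_distrib fps_compose_mult_distrib intro!: prod.cong)

lemma geom_prod_fps_mult_linear_prod_fps:
  fixes x :: "nat \<Rightarrow> 'a::idom"
  shows "geom_prod_fps (1 - b) x k * linear_prod_fps x k = linear_prod_fps x k oo (fps_const b * fps_X)"
  unfolding linear_prod_fps_compose_scale
  by (simp add: geom_prod_fps_def linear_prod_fps_def geom_fps_mult_linear flip: prod.distrib)

section \<open>Surjectivity of the map x |-> (p_1(x), ..., p_k(x))\<close>

lemma fps_nth_eq_if_mult_nth_eq: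
  fixes A B E :: "'a::field fps"
  assumes "E $ 0 \<noteq> 0" and "\<And>i. i \<le> k \<Longrightarrow> (A * E) $ i = (B * E) $ i" and "t \<le> k"
  shows "A $ t = B $ t"
proof -
  define F where "F = (A - B) * E"
  have F: "F $ i = 0" if "i \<le> k" for i
    using assms(2)[OF that] by (simp add: F_def algebra_simps)
  have "A - B = F * inverse E"
    using assms(1) by (simp add: F_def mult.assoc inverse_mult_eq_1')
  also have "\<dots> $ t = 0"
    using assms(3) by (simp add: fps_mult_nth F)
  finally show ?thesis
    by simp
qed

text \<open>The coefficients of \<open>E\<close> are found one at a time from the triangular system; at degree
  \<open>t\<close> the unknown \<open>E $ t\<close> enters with factor \<open>b ^ t - 1\<close>.\<close>
lemma exists_fps_mult_nth_eq_scaled: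
  fixes D :: "'a::field fps"
  assumes "D $ 0 = 1" and "\<And>t. 1 \<le> t \<Longrightarrow> t \<le> k \<Longrightarrow> b ^ t \<noteq> 1"
  shows "\<exists>E. E $ 0 = 1 \<and> (\<forall>t\<le>k. (D * E) $ t = b ^ t * E $ t)"
  using assms(2)
proof (induction k)
  case 0
  show ?case
    using assms(1) by (intro exI[of _ 1]) simp
next
  case (Suc k)
  then obtain E where E0: "E $ 0 = 1" and E: "\<forall>t\<le>k. (D * E) $ t = b ^ t * E $ t"
    by force
  have b: "b ^ Suc k - 1 \<noteq> 0"
    using Suc.prems[of "Suc k"] by simp
  define v where "v = ((D * E) $ Suc k - b ^ Suc k * E $ Suc k) / (b ^ Suc k - 1)"
  define E' where "E' = E + fps_const v * fps_X ^ Suc k"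
  have E'_nth: "E' $ t = E $ t + (if t = Suc k then v else 0)" for t
    by (auto simp: E'_def)
  have "D * E' = D * E + fps_const v * (fps_X ^ Suc k * D)"
    by (simp add: E'_def algebra_simps)
  then have D_E'_nth: "(D * E') $ t = (D * E) $ t + (if t < Suc k then 0 else v * D $ (t - Suc k))" for t
    by (simp add: fps_X_power_mult_nth del: power_Suc)
  have "(D * E') $ t = b ^ t * E' $ t" if "t \<le> Suc k" for t
  proof (cases "t = Suc k")
    case True
    have "(D * E) $ Suc k + v = b ^ Suc k * (E $ Suc k + v)"
      using b by (simp add: v_def field_simps)
    then show ?thesis
      using True assms(1) by (simp add: D_E'_nth E'_nth)
  next
    case False
    then show ?thesis
      using E that by (simp add: D_E'_nth E'_nth)
  qed
  moreover have "E' $ 0 = 1"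
    using E0 by (simp add: E'_nth)
  ultimately show ?case
    by blast
qed

lemma linear_prod_fps_coeffs_surj:
  fixes E :: "complex fps"
  assumes "E $ 0 = 1"
  shows "\<exists>x. \<forall>j\<le>k. linear_prod_fps x k $ j = E $ j"
proof -
  define P where "P = (\<Sum>j\<le>k. monom (E $ j) (k - j))"
  have coeff_P: "coeff P i = (if i \<le> k then E $ (k - i) else 0)" for i
  proof -
    have "coeff P i = (\<Sum>j\<le>k. if j = k - i \<and> i \<le> k then E $ j else 0)"
      unfolding P_def coeff_sum coeff_monom by (intro sum.cong) auto
    then show ?thesis
      by (cases "i \<le> k") auto
  qed
  have deg_P: "degree P = k"
  proof (rule antisym)
    show "degree P \<le> k"
      by (rule degree_le) (auto simp: coeff_P)
    show "k \<le> degree P"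
      by (rule le_degree) (simp add: coeff_P assms)
  qed
  obtain root where "smult (lead_coeff P) (\<Prod>i<degree P. [:-root i, 1:]) = P"
    using complex_poly_decompose' by blast
  then have P: "P = (\<Prod>i<k. [:-root i, 1:])"
    by (simp add: deg_P coeff_P assms)
  have linear_factor: "fps_of_poly (reflect_poly [:-r, 1:]) = 1 - fps_const r * fps_X" for r :: complex
    by (simp add: reflect_poly_def fps_of_poly_pCons flip: fps_const_neg)
  have "linear_prod_fps (\<lambda>i. root (i - 1)) k = fps_of_poly (reflect_poly P)"
    unfolding P linear_prod_fps_def reflect_poly_prod fps_of_poly_prod
    by (simp add: prod.atLeast1_atMost_eq linear_factor)
  then show ?thesis
    by (intro exI[of _ "\<lambda>i. root (i - 1)"]) (simp add: coeff_reflect_poly deg_P coeff_P)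
qed

lemma geom_prod_fps_nth_surj:
  fixes b :: complex
  assumes "\<And>t. 1 \<le> t \<Longrightarrow> t \<le> k \<Longrightarrow> b ^ t \<noteq> 1"
  shows "\<exists>x. \<forall>t\<in>{1..k}. geom_prod_fps (1 - b) x k $ t = d t"
proof -
  define D where "D = Abs_fps (\<lambda>t. if t = 0 then 1 else d t)"
  obtain E where E0: "E $ 0 = 1" and E: "\<forall>t\<le>k. (D * E) $ t = b ^ t * E $ t"
    using exists_fps_mult_nth_eq_scaled[of D k b] assms by (auto simp: D_def)
  obtain x where x: "\<forall>j\<le>k. linear_prod_fps x k $ j = E $ j"
    using linear_prod_fps_coeffs_surj[OF E0] by blast
  have "(geom_prod_fps (1 - b) x k * linear_prod_fps x k) $ t = (D * linear_prod_fps x k) $ t"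
    if "t \<le> k" for t
  proof -
    have "(geom_prod_fps (1 - b) x k * linear_prod_fps x k) $ t = b ^ t * E $ t"
      using x that by (simp add: geom_prod_fps_mult_linear_prod_fps)
    also have "\<dots> = (D * E) $ t"
      using E that by simp
    also have "\<dots> = (D * linear_prod_fps x k) $ t"
      using x that by (auto simp: fps_mult_nth intro!: sum.cong)
    finally show ?thesis .
  qed
  moreover have "linear_prod_fps x k $ 0 \<noteq> 0"
    using x E0 by simp
  ultimately have "geom_prod_fps (1 - b) x k $ t = D $ t" if "t \<le> k" for t
    using fps_nth_eq_if_mult_nth_eq that by blast
  then show ?thesis
    by (intro exI[of _ x]) (auto simp: D_def)
qed

lemma p_poly_values_surj:
  assumes "q \<noteq> 0" and "\<forall>n::nat. n > 0 \<longrightarrow> q ^ n \<noteq> 1"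
  shows "\<exists>x. \<forall>t\<in>{1..k}. eval_poly x (p_poly q t k) = c t"
proof -
  have "q ^ 2 \<noteq> 1"
    using assms(2) by simp
  then have q: "q - inverse q \<noteq> 0"
    using assms(1) by (auto simp: field_simps power2_eq_square)
  define b where "b = inverse q ^ 2"
  have "b ^ t \<noteq> 1" if "1 \<le> t" for t
    using assms that by (simp add: b_def power_inverse flip: power_mult)
  then have "\<exists>x. \<forall>t\<in>{1..k}. geom_prod_fps (1 - b) x k $ t = (q - inverse q) * c t"
    by (intro geom_prod_fps_nth_surj)
  moreover have "1 - b = inverse q * (q - inverse q)"
    using assms(1) by (simp add: b_def power2_eq_square algebra_simps)
  ultimately obtain x
    where x: "\<forall>t\<in>{1..k}. geom_prod_fps (inverse q * (q - inverse q)) x k $ t = (q - inverse q) * c t"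
    by auto
  have "eval_poly x (p_poly q t k) = c t" if "t \<in> {1..k}" for t
    using x that q geom_prod_fps_nth_eq_p_poly[of t q x k] by auto
  then show ?thesis
    by blast
qed

theorem mainTheorem17:
  fixes q :: complex and k :: nat
  assumes "q \<noteq> 0"
    and "\<forall>n::nat. n > 0 \<longrightarrow> q ^ n \<noteq> 1"
    and "k > 0"
  shows "alg_indep_on {1..k} (\<lambda>t. p_poly q t k)"
  unfolding alg_indep_on_def
proof (intro allI impI notI)
  fix F
  assume F: "F \<noteq> 0 \<and> (\<forall>m\<in>Poly_Mapping.keys F. Poly_Mapping.keys m \<subseteq> {1..k})"
    and "subst_poly (\<lambda>t. p_poly q t k) F = 0"
  have "eval_poly c F = 0" for c
  proof -
    obtain x where x: "\<forall>t\<in>{1..k}. eval_poly x (p_poly q t k) = c t"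
      using p_poly_values_surj[OF assms(1,2)] by blast
    have "eval_poly c F = eval_poly (\<lambda>t. eval_poly x (p_poly q t k)) F"
      using F x by (intro eval_poly_cong[of F "{1..k}"]) auto
    also have "\<dots> = eval_poly x (subst_poly (\<lambda>t. p_poly q t k) F)"
      by (simp add: eval_poly_subst_poly)
    finally show ?thesis
      using \<open>subst_poly (\<lambda>t. p_poly q t k) F = 0\<close> by simp
  qed
  then show False
    using F eval_poly_eq_0_imp_eq_0 by blast
qed

end
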